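(* The set function $\mu^*$ has the following properties. (i) Monotonicity: if $A \subseteq B \subseteq \Omega$ then $\mu^*(A) \le \mu^*(B)$. (ii) Countable subadditivity: for any sequence of sets $A_n \subseteq \Omega$, $n \in \mathbb{N}$, one has $\mu^*\big(\bigcup_{n\in\mathbb{N}} A_n\big) \le \sum_{n\in\mathbb{N}} \mu^*(A_n)$. (iii) Singletons: if $\mathcal{P} = \{\mathbb{P}\}$ consists of a single probability measure, then $\mu^*(A) = \mathbb{P}(A)$ for every $A \in \mathcal{F}$. In particular (since $\mu^*(\emptyset)=0$), $\mu^*$ is an outer measure on $\Omega$.
   Context: Standing setup: $(\Omega, (\mathcal{F}_t)_{t\in\mathbb{N}_0}, \mathcal{F})$ is a filtered measurable space with $\mathcal{F} = \sigma\big(\bigcup_{t} \mathcal{F}_t\big)$. A stopping time is a map $\tau:\Omega\to\mathbb{N}_0\cup\{\infty\}$ with $\{\tau \le t\}\in\mathcal{F}_t$ for all $t$; $\mathcal{T}$ denotes the set of all stopping times. $\mathcal{P}$ is an arbitrary family of probability measures on $\mathcal{F}$. The inverse-capital measure is the $[0,1]$-valued set function defined for every $A\subseteq\Omega$ by $$\mu^*(A) = \inf_{\tau\in\mathcal{T}:\, A\subseteq\{\tau<\infty\}} \ \sup_{\mathbb{P}\in\mathcal{P}} \mathbb{P}(\tau<\infty).$$ *)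

theory Defs
  imports "HOL-Probability.Probability"
begin

definition is_filtration :: "'a set \<Rightarrow> (nat \<Rightarrow> 'a set set) \<Rightarrow> bool" where
  "is_filtration \<Omega> F \<longleftrightarrow> (\<forall>t. sigma_algebra \<Omega> (F t)) \<and> (\<forall>s t. s \<le> t \<longrightarrow> F s \<subseteq> F t)"

definition F_infty :: "'a set \<Rightarrow> (nat \<Rightarrow> 'a set set) \<Rightarrow> 'a set set" where
  "F_infty \<Omega> F = sigma_sets \<Omega> (\<Union>t. F t)"

definition stopping_times :: "'a set \<Rightarrow> (nat \<Rightarrow> 'a set set) \<Rightarrow> ('a \<Rightarrow> enat) set" where
  "stopping_times \<Omega> F = {\<tau>. \<forall>t::nat. {\<omega>\<in>\<Omega>. \<tau> \<omega> \<le> enat t} \<in> F t}"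

definition prob_measures_on :: "'a set \<Rightarrow> (nat \<Rightarrow> 'a set set) \<Rightarrow> 'a measure set" where
  "prob_measures_on \<Omega> F = {P. prob_space P \<and> space P = \<Omega> \<and> sets P = F_infty \<Omega> F}"

definition inv_capital :: "'a set \<Rightarrow> (nat \<Rightarrow> 'a set set) \<Rightarrow> 'a measure set \<Rightarrow> 'a set \<Rightarrow> ennreal" where
  "inv_capital \<Omega> F \<P> A =
     (INF \<tau> \<in> {\<tau> \<in> stopping_times \<Omega> F. A \<subseteq> {\<omega>\<in>\<Omega>. \<tau> \<omega> < \<infinity>}}.
        SUP P \<in> \<P>. emeasure P {\<omega>\<in>\<Omega>. \<tau> \<omega> < \<infinity>})"

end

theory Submission
  imports Defs
begin

text \<open>
Monotonicity is immediate, since enlarging A shrinks the set of admissible stopping times.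
For countable subadditivity, pick stopping times \<open>\<tau>\<^sub>n\<close> that are
\<open>\<epsilon>2\<^sup>-\<^sup>n\<close>-optimal for \<open>A\<^sub>n\<close>; their pointwise infimum is a stopping time
that is finite on \<open>\<Union>A\<^sub>n\<close>, and \<open>{inf \<tau>\<^sub>n < \<infinity>} = \<Union>{\<tau>\<^sub>n < \<infinity>}\<close>, so subadditivity of each
\<open>\<P>\<close> passes through the supremum.
For a single measure \<open>\<P>\<close>, \<open>\<mu>\<^sup>*(A) \<ge> \<P>(A)\<close> by monotonicity. Conversely \<open>\<P>(A)\<close> is the
Carath\'eodory outer measure of A with respect to the algebra \<open>\<Union>\<^sub>t \<F>\<^sub>t\<close>, and every
countable cover \<open>(C\<^sub>i)\<close> of A by sets \<open>C\<^sub>i \<in> \<F>(s\<^sub>i)\<close> is the event \<open>{\<tau> < \<infinity>}\<close> of the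
first-entry time \<open>\<tau> = inf {s\<^sub>i. \<omega> \<in> C\<^sub>i}\<close>.
\<close>

lemma is_filtration_sigma_algebra:
  "is_filtration \<Omega> F \<Longrightarrow> sigma_algebra \<Omega> (F t)"
  unfolding is_filtration_def by blast

lemma is_filtration_mono:
  "is_filtration \<Omega> F \<Longrightarrow> s \<le> t \<Longrightarrow> F s \<subseteq> F t"
  unfolding is_filtration_def by blast

lemma is_filtration_subset_Pow:
  assumes "is_filtration \<Omega> F"
  shows "F t \<subseteq> Pow \<Omega>"
proof -
  interpret sigma_algebra \<Omega> "F t" using assms by (rule is_filtration_sigma_algebra)
  show ?thesis by (rule space_closed)
qed

lemma is_filtration_algebra_Union:
  assumes filt: "is_filtration \<Omega> F"
  shows "algebra \<Omega> (\<Union>t. F t)"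
  unfolding algebra_iff_Un
proof (intro conjI ballI)
  show "(\<Union>t. F t) \<subseteq> Pow \<Omega>" using is_filtration_subset_Pow[OF filt] by blast
  interpret F0: sigma_algebra \<Omega> "F 0" using filt by (rule is_filtration_sigma_algebra)
  show "{} \<in> (\<Union>t. F t)" using F0.empty_sets by blast
next
  fix a assume "a \<in> (\<Union>t. F t)"
  then obtain t where a: "a \<in> F t" by blast
  interpret Ft: sigma_algebra \<Omega> "F t" using filt by (rule is_filtration_sigma_algebra)
  show "\<Omega> - a \<in> (\<Union>t. F t)" using Ft.compl_sets[OF a] by blast
next
  fix a b assume "a \<in> (\<Union>t. F t)" "b \<in> (\<Union>t. F t)"
  then obtain s t where "a \<in> F s" "b \<in> F t" by blast
  then have ab: "a \<in> F (max s t)" "b \<in> F (max s t)"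
    using is_filtration_mono[OF filt, of s "max s t"] is_filtration_mono[OF filt, of t "max s t"]
    by auto
  interpret Fst: sigma_algebra \<Omega> "F (max s t)" using filt by (rule is_filtration_sigma_algebra)
  show "a \<union> b \<in> (\<Union>t. F t)" using Fst.Un[OF ab] by blast
qed

lemma INF_enat_le_enat_iff:
  fixes g :: "'b \<Rightarrow> enat"
  shows "(INF i\<in>I. g i) \<le> enat t \<longleftrightarrow> (\<exists>i\<in>I. g i \<le> enat t)"
proof -
  have "\<And>x::enat. x \<le> enat t \<longleftrightarrow> x < enat (Suc t)"
    by (case_tac x) auto
  then show ?thesis by (simp add: INF_less_iff)
qed

lemma stopping_time_finite_in_F_infty:
  assumes "\<tau> \<in> stopping_times \<Omega> F"
  shows "{\<omega>\<in>\<Omega>. \<tau> \<omega> < \<infinity>} \<in> F_infty \<Omega> F"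
proof -
  have eq: "{\<omega>\<in>\<Omega>. \<tau> \<omega> < \<infinity>} = (\<Union>t. {\<omega>\<in>\<Omega>. \<tau> \<omega> \<le> enat t})"
    by (auto, case_tac "\<tau> x", auto)
  have "\<And>t. {\<omega>\<in>\<Omega>. \<tau> \<omega> \<le> enat t} \<in> sigma_sets \<Omega> (\<Union>t. F t)"
    using assms unfolding stopping_times_def by (auto intro: sigma_sets.Basic)
  then show ?thesis unfolding eq F_infty_def by (intro sigma_sets.Union) auto
qed

lemma stopping_times_INF:
  fixes \<tau> :: "nat \<Rightarrow> 'a \<Rightarrow> enat"
  assumes filt: "is_filtration \<Omega> F" and st: "\<And>n. \<tau> n \<in> stopping_times \<Omega> F"
  shows "(\<lambda>\<omega>. INF n. \<tau> n \<omega>) \<in> stopping_times \<Omega> F"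
  unfolding stopping_times_def
proof (intro CollectI allI)
  fix t
  interpret sigma_algebra \<Omega> "F t" using filt by (rule is_filtration_sigma_algebra)
  have "{\<omega>\<in>\<Omega>. (INF n. \<tau> n \<omega>) \<le> enat t} = (\<Union>n. {\<omega>\<in>\<Omega>. \<tau> n \<omega> \<le> enat t})"
    by (auto simp: INF_enat_le_enat_iff)
  also have "\<dots> \<in> F t"
    using st by (intro countable_nat_UN) (auto simp: stopping_times_def)
  finally show "{\<omega>\<in>\<Omega>. (INF n. \<tau> n \<omega>) \<le> enat t} \<in> F t" .
qed

lemma first_entry_stopping_time:
  fixes C :: "nat \<Rightarrow> 'a set" and s :: "nat \<Rightarrow> nat"
  assumes filt: "is_filtration \<Omega> F" and C: "\<And>i. C i \<in> F (s i)"
  defines "\<tau> \<equiv> \<lambda>\<omega>. INF i\<in>{i. \<omega> \<in> C i}. enat (s i)"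
  shows "\<tau> \<in> stopping_times \<Omega> F" and "{\<omega>\<in>\<Omega>. \<tau> \<omega> < \<infinity>} = (\<Union>i. C i)"
proof -
  have C_subset: "\<And>i. C i \<subseteq> \<Omega>" using is_filtration_subset_Pow[OF filt] C by blast
  show "\<tau> \<in> stopping_times \<Omega> F"
    unfolding stopping_times_def
  proof (intro CollectI allI)
    fix t
    interpret sigma_algebra \<Omega> "F t" using filt by (rule is_filtration_sigma_algebra)
    have "{\<omega>\<in>\<Omega>. \<tau> \<omega> \<le> enat t} = (\<Union>i. if s i \<le> t then C i else {})"
      using C_subset by (auto simp: \<tau>_def INF_enat_le_enat_iff split: if_splits)
    also have "\<dots> \<in> F t"
      using C is_filtration_mono[OF filt] by (intro countable_nat_UN) (auto split: if_splits)
    finally show "{\<omega>\<in>\<Omega>. \<tau> \<omega> \<le> enat t} \<in> F t" .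
  qed
  have "\<And>\<omega>. \<tau> \<omega> < \<infinity> \<longleftrightarrow> (\<exists>i. \<omega> \<in> C i)"
    unfolding \<tau>_def by (simp only: INF_less_iff) simp
  then show "{\<omega>\<in>\<Omega>. \<tau> \<omega> < \<infinity>} = (\<Union>i. C i)"
    using C_subset by blast
qed

lemma INF_le_suminf_INF_ennreal:
  fixes c :: "'b \<Rightarrow> ennreal" and T :: "nat \<Rightarrow> 'b set" and U :: "'b set"
  assumes combine: "\<And>\<tau>. (\<And>n. \<tau> n \<in> T n) \<Longrightarrow> \<exists>\<sigma>\<in>U. c \<sigma> \<le> (\<Sum>n. c (\<tau> n))"
  shows "(INF \<sigma>\<in>U. c \<sigma>) \<le> (\<Sum>n. INF \<tau>\<in>T n. c \<tau>)"
proof -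
  define I where "I n = (INF \<tau>\<in>T n. c \<tau>)" for n
  have "(INF \<sigma>\<in>U. c \<sigma>) \<le> (\<Sum>n. I n)"
  proof (rule ennreal_le_epsilon)
    fix e :: real assume fin: "(\<Sum>n. I n) < top" and e: "0 < e"
    have "I n < I n + e * (1/2)^Suc n" for n
      using fin e by (auto simp add: less_top dest!: ennreal_suminf_lessD)
    then have "\<exists>\<tau>\<in>T n. c \<tau> < I n + e * (1/2)^Suc n" for n
      by (simp add: I_def INF_less_iff)
    then obtain \<tau> where \<tau>: "\<And>n. \<tau> n \<in> T n"
      and \<tau>_close: "\<And>n. c (\<tau> n) < I n + e * (1/2)^Suc n"
      by metis
    obtain \<sigma> where "\<sigma> \<in> U" and "c \<sigma> \<le> (\<Sum>n. c (\<tau> n))" using combine[OF \<tau>] by blast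
    then have "(INF \<sigma>\<in>U. c \<sigma>) \<le> (\<Sum>n. c (\<tau> n))" by (meson INF_lower2)
    also have "\<dots> \<le> (\<Sum>n. I n + e * (1/2)^Suc n)"
      using \<tau>_close by (intro suminf_le) (auto intro: less_imp_le)
    also have "\<dots> = (\<Sum>n. I n) + (\<Sum>n. ennreal e * ennreal ((1/2) ^ Suc n))"
      using e by (subst suminf_add[symmetric])
        (auto simp del: ennreal_suminf_cmult simp add: ennreal_mult[symmetric])
    also have "\<dots> = (\<Sum>n. I n) + e"
      unfolding ennreal_suminf_cmult
      by (subst suminf_ennreal_eq[OF zero_le_power power_half_series]) auto
    finally show "(INF \<sigma>\<in>U. c \<sigma>) \<le> (\<Sum>n. I n) + e" .
  qed
  then show ?thesis by (simp add: I_def)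
qed

lemma (in algebra) measure_space_outer_measure:
  assumes posf: "positive M f" and ca: "countably_additive M f"
  shows "measure_space \<Omega> (sigma_sets \<Omega> M) (outer_measure M f)"
proof -
  have inc: "increasing M f"
    by (metis additive_increasing ca countably_additive_additive posf)
  let ?O = "outer_measure M f"
  define ls where "ls = lambda_system \<Omega> (Pow \<Omega>) ?O"
  have ls: "measure_space \<Omega> ls ?O"
    using sigma_algebra.caratheodory_lemma
            [OF sigma_algebra_Pow outer_measure_space_outer_measure[OF posf inc]]
    by (simp add: ls_def)
  have "sigma_sets \<Omega> M \<subseteq> ls"
  proof (rule sigma_algebra.sigma_sets_subset)
    show "sigma_algebra \<Omega> ls" using ls by (simp add: measure_space_def)
    show "M \<subseteq> ls"
      unfolding ls_def
      by (metis ca posf inc countably_additive_additive algebra_subset_lambda_system)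
  qed
  then show ?thesis
    by (rule measure_down[OF ls sigma_algebra_sigma_sets[OF space_closed]])
qed

text \<open>The extension of a finite measure from a generating algebra is unique, and Carath\'eodory's
  outer measure is one such extension.\<close>

lemma (in algebra) emeasure_eq_outer_measure:
  assumes sets_P: "sets P = sigma_sets \<Omega> M" and fin: "emeasure P \<Omega> \<noteq> \<infinity>"
    and A: "A \<in> sigma_sets \<Omega> M"
  shows "emeasure P A = outer_measure M (emeasure P) A"
proof -
  let ?O = "outer_measure M (emeasure P)"
  have posf: "positive M (emeasure P)" by (simp add: positive_def)
  have ca: "countably_additive M (emeasure P)"
    using emeasure_countably_additive[of P] sets_P
    unfolding countably_additive_def by blast
  have ms: "measure_space \<Omega> (sigma_sets \<Omega> M) ?O"
    by (rule measure_space_outer_measure[OF posf ca])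
  define N where "N = measure_of \<Omega> (sigma_sets \<Omega> M) ?O"
  have sets_N: "sets N = sigma_sets \<Omega> M"
    unfolding N_def using ms by (intro sigma_algebra.sets_measure_of_eq) (simp add: measure_space_def)
  have emeasure_N: "\<And>X. X \<in> sigma_sets \<Omega> M \<Longrightarrow> emeasure N X = ?O X"
    unfolding N_def using ms by (intro emeasure_measure_of_sigma) (auto simp: measure_space_def)
  have "P = N"
  proof (rule measure_eqI_generator_eq[where E=M and \<Omega>=\<Omega> and A="\<lambda>_. \<Omega>"])
    show "Int_stable M" using Int by (auto simp: Int_stable_def)
    show "range (\<lambda>_. \<Omega>) \<subseteq> M" using top by auto
    fix X assume "X \<in> M"
    then show "emeasure P X = emeasure N X"
      using emeasure_N outer_measure_agrees[OF posf ca] by auto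
  qed (use space_closed sets_P sets_N fin in auto)
  then show ?thesis using emeasure_N[OF A] by simp
qed

lemma inv_capital_le:
  assumes "\<tau> \<in> stopping_times \<Omega> F" and "A \<subseteq> {\<omega>\<in>\<Omega>. \<tau> \<omega> < \<infinity>}"
  shows "inv_capital \<Omega> F \<P> A \<le> (SUP P\<in>\<P>. emeasure P {\<omega>\<in>\<Omega>. \<tau> \<omega> < \<infinity>})"
  unfolding inv_capital_def by (rule INF_lower) (use assms in blast)

lemma inv_capital_mono:
  assumes "A \<subseteq> B"
  shows "inv_capital \<Omega> F \<P> A \<le> inv_capital \<Omega> F \<P> B"
  unfolding inv_capital_def using assms by (auto intro!: INF_superset_mono)

lemma inv_capital_empty:
  assumes filt: "is_filtration \<Omega> F"
  shows "inv_capital \<Omega> F \<P> {} = 0"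
proof -
  have "{} \<in> F t" for t
  proof -
    interpret sigma_algebra \<Omega> "F t" using filt by (rule is_filtration_sigma_algebra)
    show ?thesis by (rule empty_sets)
  qed
  then have "(\<lambda>_. \<infinity>) \<in> stopping_times \<Omega> F"
    unfolding stopping_times_def by auto
  then have "inv_capital \<Omega> F \<P> {} \<le> (SUP P\<in>\<P>. emeasure P {\<omega>\<in>\<Omega>. (\<infinity>::enat) < \<infinity>})"
    by (rule inv_capital_le) simp
  also have "\<dots> \<le> 0"
    by (rule SUP_least) simp
  finally show ?thesis by simp
qed

lemma inv_capital_countably_subadditive:
  assumes filt: "is_filtration \<Omega> F" and \<P>: "\<P> \<subseteq> prob_measures_on \<Omega> F"
  shows "inv_capital \<Omega> F \<P> (\<Union>n. A n) \<le> (\<Sum>n. inv_capital \<Omega> F \<P> (A n))"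
  unfolding inv_capital_def
proof (rule INF_le_suminf_INF_ennreal[where
      c = "\<lambda>\<tau>. SUP P\<in>\<P>. emeasure P {\<omega>\<in>\<Omega>. \<tau> \<omega> < \<infinity>}" and
      T = "\<lambda>n. {\<tau> \<in> stopping_times \<Omega> F. A n \<subseteq> {\<omega>\<in>\<Omega>. \<tau> \<omega> < \<infinity>}}"])
  fix \<tau> :: "nat \<Rightarrow> 'a \<Rightarrow> enat"
  assume \<tau>: "\<And>n. \<tau> n \<in> {\<tau> \<in> stopping_times \<Omega> F. A n \<subseteq> {\<omega>\<in>\<Omega>. \<tau> \<omega> < \<infinity>}}"
  define \<sigma> where "\<sigma> \<omega> = (INF n. \<tau> n \<omega>)" for \<omega>
  have st: "\<And>n. \<tau> n \<in> stopping_times \<Omega> F" using \<tau> by blast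
  have "\<sigma> \<omega> < \<infinity> \<longleftrightarrow> (\<exists>n. \<tau> n \<omega> < \<infinity>)" for \<omega>
    unfolding \<sigma>_def by (simp only: INF_less_iff) simp
  then have \<sigma>_finite: "{\<omega>\<in>\<Omega>. \<sigma> \<omega> < \<infinity>} = (\<Union>n. {\<omega>\<in>\<Omega>. \<tau> n \<omega> < \<infinity>})"
    by blast
  have \<sigma>_st: "\<sigma> \<in> stopping_times \<Omega> F"
    using stopping_times_INF[OF filt st] unfolding \<sigma>_def[abs_def] .
  have \<sigma>_covers: "(\<Union>n. A n) \<subseteq> {\<omega>\<in>\<Omega>. \<sigma> \<omega> < \<infinity>}"
    using \<tau> unfolding \<sigma>_finite by blast
  have "(SUP P\<in>\<P>. emeasure P {\<omega>\<in>\<Omega>. \<sigma> \<omega> < \<infinity>})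
      \<le> (\<Sum>n. SUP P\<in>\<P>. emeasure P {\<omega>\<in>\<Omega>. \<tau> n \<omega> < \<infinity>})"
  proof (rule SUP_least)
    fix P assume P: "P \<in> \<P>"
    then have "sets P = F_infty \<Omega> F" using \<P> by (auto simp: prob_measures_on_def)
    then have "emeasure P {\<omega>\<in>\<Omega>. \<sigma> \<omega> < \<infinity>} \<le> (\<Sum>n. emeasure P {\<omega>\<in>\<Omega>. \<tau> n \<omega> < \<infinity>})"
      unfolding \<sigma>_finite using stopping_time_finite_in_F_infty[OF st]
      by (intro emeasure_subadditive_countably) auto
    also have "\<dots> \<le> (\<Sum>n. SUP P\<in>\<P>. emeasure P {\<omega>\<in>\<Omega>. \<tau> n \<omega> < \<infinity>})"
      using P by (intro suminf_le) (auto intro: SUP_upper)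
    finally show "emeasure P {\<omega>\<in>\<Omega>. \<sigma> \<omega> < \<infinity>}
        \<le> (\<Sum>n. SUP P\<in>\<P>. emeasure P {\<omega>\<in>\<Omega>. \<tau> n \<omega> < \<infinity>})" .
  qed
  with \<sigma>_st \<sigma>_covers show "\<exists>\<sigma>\<in>{\<sigma> \<in> stopping_times \<Omega> F. (\<Union>n. A n) \<subseteq> {\<omega>\<in>\<Omega>. \<sigma> \<omega> < \<infinity>}}.
      (SUP P\<in>\<P>. emeasure P {\<omega>\<in>\<Omega>. \<sigma> \<omega> < \<infinity>})
        \<le> (\<Sum>n. SUP P\<in>\<P>. emeasure P {\<omega>\<in>\<Omega>. \<tau> n \<omega> < \<infinity>})"
    by blast
qed

lemma inv_capital_le_outer_measure:
  assumes filt: "is_filtration \<Omega> F" and P: "P \<in> prob_measures_on \<Omega> F"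
  shows "inv_capital \<Omega> F {P} A \<le> outer_measure (\<Union>t. F t) (emeasure P) A"
  unfolding outer_measure_def
proof (rule INF_greatest)
  fix C :: "nat \<Rightarrow> 'a set"
  assume "C \<in> {C. range C \<subseteq> (\<Union>t. F t) \<and> disjoint_family C \<and> A \<subseteq> (\<Union>i. C i)}"
  then have C: "\<And>i. C i \<in> (\<Union>t. F t)" and A: "A \<subseteq> (\<Union>i. C i)" by auto
  have "\<forall>i. \<exists>t. C i \<in> F t" using C by blast
  then obtain s where s: "\<And>i. C i \<in> F (s i)" by metis
  define \<tau> where "\<tau> \<equiv> \<lambda>\<omega>. INF i\<in>{i. \<omega> \<in> C i}. enat (s i)"
  have st: "\<tau> \<in> stopping_times \<Omega> F" and \<tau>_finite: "{\<omega>\<in>\<Omega>. \<tau> \<omega> < \<infinity>} = (\<Union>i. C i)"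
    unfolding \<tau>_def by (rule first_entry_stopping_time[of \<Omega> F C s, OF filt s])+
  have sets_P: "sets P = sigma_sets \<Omega> (\<Union>t. F t)"
    using P unfolding prob_measures_on_def F_infty_def by auto
  have "A \<subseteq> {\<omega>\<in>\<Omega>. \<tau> \<omega> < \<infinity>}" using A \<tau>_finite by simp
  then have "inv_capital \<Omega> F {P} A \<le> (SUP Q\<in>{P}. emeasure Q {\<omega>\<in>\<Omega>. \<tau> \<omega> < \<infinity>})"
    by (rule inv_capital_le[OF st])
  also have "\<dots> = emeasure P {\<omega>\<in>\<Omega>. \<tau> \<omega> < \<infinity>}" by simp
  also have "\<dots> \<le> (\<Sum>i. emeasure P (C i))"
    unfolding \<tau>_finite using C sets_P by (intro emeasure_subadditive_countably) auto
  finally show "inv_capital \<Omega> F {P} A \<le> (\<Sum>i. emeasure P (C i))" .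
qed

lemma inv_capital_singleton:
  assumes filt: "is_filtration \<Omega> F" and P: "P \<in> prob_measures_on \<Omega> F"
    and A: "A \<in> F_infty \<Omega> F"
  shows "inv_capital \<Omega> F {P} A = emeasure P A"
proof (rule antisym)
  interpret algebra \<Omega> "\<Union>t. F t" using filt by (rule is_filtration_algebra_Union)
  interpret prob_space P using P by (simp add: prob_measures_on_def)
  have sets_P: "sets P = sigma_sets \<Omega> (\<Union>t. F t)" and space_P: "space P = \<Omega>"
    using P unfolding prob_measures_on_def F_infty_def by auto
  have "emeasure P A = outer_measure (\<Union>t. F t) (emeasure P) A"
    using A sets_P space_P by (intro emeasure_eq_outer_measure) (auto simp: F_infty_def)
  then show "inv_capital \<Omega> F {P} A \<le> emeasure P A"
    using inv_capital_le_outer_measure[OF filt P] by simp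
  show "emeasure P A \<le> inv_capital \<Omega> F {P} A"
    unfolding inv_capital_def
  proof (rule INF_greatest)
    fix \<tau> assume \<tau>: "\<tau> \<in> {\<tau> \<in> stopping_times \<Omega> F. A \<subseteq> {\<omega>\<in>\<Omega>. \<tau> \<omega> < \<infinity>}}"
    then have "{\<omega>\<in>\<Omega>. \<tau> \<omega> < \<infinity>} \<in> sets P"
      using stopping_time_finite_in_F_infty P by (auto simp: prob_measures_on_def)
    then show "emeasure P A \<le> (SUP Q\<in>{P}. emeasure Q {\<omega>\<in>\<Omega>. \<tau> \<omega> < \<infinity>})"
      using \<tau> by (auto intro!: emeasure_mono)
  qed
qed

theorem mainTheorem1:
  fixes \<Omega> :: "'a set" and F :: "nat \<Rightarrow> 'a set set" and \<P> :: "'a measure set"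
  assumes "is_filtration \<Omega> F"
    and "\<P> \<subseteq> prob_measures_on \<Omega> F"
  shows "(\<forall>A B. A \<subseteq> B \<and> B \<subseteq> \<Omega> \<longrightarrow> inv_capital \<Omega> F \<P> A \<le> inv_capital \<Omega> F \<P> B)
    \<and> (\<forall>A :: nat \<Rightarrow> 'a set. (\<forall>n. A n \<subseteq> \<Omega>) \<longrightarrow>
          inv_capital \<Omega> F \<P> (\<Union>n. A n) \<le> (\<Sum>n. inv_capital \<Omega> F \<P> (A n)))
    \<and> (\<forall>P. \<P> = {P} \<longrightarrow> (\<forall>A \<in> F_infty \<Omega> F. inv_capital \<Omega> F \<P> A = emeasure P A))
    \<and> inv_capital \<Omega> F \<P> {} = 0
    \<and> outer_measure_space (Pow \<Omega>) (inv_capital \<Omega> F \<P>)"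
proof (intro conjI allI impI ballI)
  show "inv_capital \<Omega> F \<P> A \<le> inv_capital \<Omega> F \<P> B" if "A \<subseteq> B \<and> B \<subseteq> \<Omega>" for A B
    using that by (intro inv_capital_mono) blast
  show subadditive: "inv_capital \<Omega> F \<P> (\<Union>n. A n) \<le> (\<Sum>n. inv_capital \<Omega> F \<P> (A n))" for A
    by (rule inv_capital_countably_subadditive[OF assms])
  show "inv_capital \<Omega> F \<P> A = emeasure P A" if "\<P> = {P}" and "A \<in> F_infty \<Omega> F" for P A
    unfolding that(1) using assms(2) that by (intro inv_capital_singleton[OF assms(1)]) auto
  show empty: "inv_capital \<Omega> F \<P> {} = 0"
    by (rule inv_capital_empty[OF assms(1)])
  show "outer_measure_space (Pow \<Omega>) (inv_capital \<Omega> F \<P>)"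
    unfolding outer_measure_space_def positive_def increasing_def countably_subadditive_def
    using empty subadditive inv_capital_mono by blast
qed

end
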